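(* Let $\mathcal{C}$ be a stable M-category with limits of chains, let $\alpha$ be an ordinal, and let $f,g\colon D\to D'$ be natural transformations between $\alpha^{op}$-chains $D,D'$ in $\mathcal{C}$, with induced morphisms $\lim f,\lim g\colon\lim D\to\lim D'$. Then $d(\lim f,\lim g)\le\sup_{\beta<\alpha}d(f_\beta,g_\beta)$.
   Context: An M-category is a category in which every hom-set carries a complete, 1-bounded ultrametric $d$ (i.e. $d\le1$ and $d(x,z)\le\max(d(x,y),d(y,z))$) such that composition is non-expansive with respect to the max-metric on the product of hom-sets. It is stable if for all parallel $f,g\colon A\to B$ and every inhabited jointly monic family $h_i\colon B\to C_i$ ($i\in I$), $d(f,g)=\sup_{i\in I}d(h_i\cdot f,h_i\cdot g)$. "Limits of chains" means limits of $\alpha^{op}$-chains (diagrams indexed by the opposite of the ordinal $\alpha$ viewed as a poset) exist for all ordinals $\alpha$. *)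

theory Defs
  imports Main "HOL.Real" "HOL.Limits" Complex_Main
begin

record ('o, 'm) cat =
  Obj  :: "'o set"
  Arr  :: "'m set"
  Dom  :: "'m \<Rightarrow> 'o"
  Cod  :: "'m \<Rightarrow> 'o"
  Idm  :: "'o \<Rightarrow> 'm"
  Comp :: "'m \<Rightarrow> 'm \<Rightarrow> 'm"   (* Comp C g f = g \<cdot> f, first f then g *)

definition hom :: "('o, 'm) cat \<Rightarrow> 'o \<Rightarrow> 'o \<Rightarrow> 'm set" where
  "hom C A B = {f \<in> Arr C. Dom C f = A \<and> Cod C f = B}"

definition category :: "('o, 'm) cat \<Rightarrow> bool" where
  "category C \<longleftrightarrow>
     (\<forall>f \<in> Arr C. Dom C f \<in> Obj C \<and> Cod C f \<in> Obj C) \<and>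
     (\<forall>A \<in> Obj C. Idm C A \<in> hom C A A) \<and>
     (\<forall>f \<in> Arr C. \<forall>g \<in> Arr C. Cod C f = Dom C g \<longrightarrow>
         Comp C g f \<in> hom C (Dom C f) (Cod C g)) \<and>
     (\<forall>f \<in> Arr C. Comp C f (Idm C (Dom C f)) = f \<and> Comp C (Idm C (Cod C f)) f = f) \<and>
     (\<forall>f \<in> Arr C. \<forall>g \<in> Arr C. \<forall>h \<in> Arr C.
         Cod C f = Dom C g \<longrightarrow> Cod C g = Dom C h \<longrightarrow>
         Comp C h (Comp C g f) = Comp C (Comp C h g) f)"

definition complete_bounded_ultrametric_on :: "'m set \<Rightarrow> ('m \<Rightarrow> 'm \<Rightarrow> real) \<Rightarrow> bool" where
  "complete_bounded_ultrametric_on S d \<longleftrightarrow>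
     (\<forall>x \<in> S. \<forall>y \<in> S. 0 \<le> d x y \<and> d x y \<le> 1 \<and> (d x y = 0 \<longleftrightarrow> x = y) \<and> d x y = d y x) \<and>
     (\<forall>x \<in> S. \<forall>y \<in> S. \<forall>z \<in> S. d x z \<le> max (d x y) (d y z)) \<and>
     (\<forall>s :: nat \<Rightarrow> 'm. (\<forall>n. s n \<in> S) \<longrightarrow>
        (\<forall>e > 0. \<exists>N. \<forall>m \<ge> N. \<forall>n \<ge> N. d (s m) (s n) < e) \<longrightarrow>
        (\<exists>x \<in> S. (\<lambda>n. d (s n) x) \<longlonglongrightarrow> 0))"

definition M_category :: "('o, 'm) cat \<Rightarrow> ('m \<Rightarrow> 'm \<Rightarrow> real) \<Rightarrow> bool" where
  "M_category C d \<longleftrightarrow> category C \<and>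
     (\<forall>A \<in> Obj C. \<forall>B \<in> Obj C. complete_bounded_ultrametric_on (hom C A B) d) \<and>
     (\<forall>A \<in> Obj C. \<forall>B \<in> Obj C. \<forall>E \<in> Obj C.
        \<forall>f \<in> hom C A B. \<forall>f' \<in> hom C A B. \<forall>g \<in> hom C B E. \<forall>g' \<in> hom C B E.
          d (Comp C g f) (Comp C g' f') \<le> max (d g g') (d f f'))"

text \<open>A family of morphisms out of B, given as a set H (an indexed family and its
  image are jointly monic together and have the same supremum), is jointly monic.\<close>
definition jointly_monic :: "('o, 'm) cat \<Rightarrow> 'o \<Rightarrow> 'm set \<Rightarrow> bool" where
  "jointly_monic C B H \<longleftrightarrow>
     (\<forall>X \<in> Obj C. \<forall>u \<in> hom C X B. \<forall>v \<in> hom C X B.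
        (\<forall>h \<in> H. Comp C h u = Comp C h v) \<longrightarrow> u = v)"

definition stable :: "('o, 'm) cat \<Rightarrow> ('m \<Rightarrow> 'm \<Rightarrow> real) \<Rightarrow> bool" where
  "stable C d \<longleftrightarrow>
     (\<forall>A \<in> Obj C. \<forall>B \<in> Obj C. \<forall>f \<in> hom C A B. \<forall>g \<in> hom C A B. \<forall>H.
        H \<noteq> {} \<longrightarrow> (\<forall>h \<in> H. h \<in> Arr C \<and> Dom C h = B) \<longrightarrow> jointly_monic C B H \<longrightarrow>
        d f g = (SUP h \<in> H. d (Comp C h f) (Comp C h g)))"

text \<open>An ordinal is represented as a subset I of a well-ordered type 'i (with the induced
  order).\<close>
definition op_chain :: "('o, 'm) cat \<Rightarrow> ('i::wellorder) set \<Rightarrow> ('i \<Rightarrow> 'o) \<Rightarrow> ('i \<Rightarrow> 'i \<Rightarrow> 'm) \<Rightarrow> bool" where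
  "op_chain C I DO DM \<longleftrightarrow>
     (\<forall>i \<in> I. DO i \<in> Obj C \<and> DM i i = Idm C (DO i)) \<and>
     (\<forall>i \<in> I. \<forall>j \<in> I. i \<le> j \<longrightarrow> DM i j \<in> hom C (DO j) (DO i)) \<and>
     (\<forall>i \<in> I. \<forall>j \<in> I. \<forall>k \<in> I. i \<le> j \<longrightarrow> j \<le> k \<longrightarrow> Comp C (DM i j) (DM j k) = DM i k)"

definition nat_trans :: "('o, 'm) cat \<Rightarrow> ('i::wellorder) set \<Rightarrow> ('i \<Rightarrow> 'o) \<Rightarrow> ('i \<Rightarrow> 'i \<Rightarrow> 'm)
    \<Rightarrow> ('i \<Rightarrow> 'o) \<Rightarrow> ('i \<Rightarrow> 'i \<Rightarrow> 'm) \<Rightarrow> ('i \<Rightarrow> 'm) \<Rightarrow> bool" where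
  "nat_trans C I DO DM DO' DM' f \<longleftrightarrow>
     (\<forall>i \<in> I. f i \<in> hom C (DO i) (DO' i)) \<and>
     (\<forall>i \<in> I. \<forall>j \<in> I. i \<le> j \<longrightarrow> Comp C (DM' i j) (f j) = Comp C (f i) (DM i j))"

definition is_cone :: "('o, 'm) cat \<Rightarrow> ('i::wellorder) set \<Rightarrow> ('i \<Rightarrow> 'o) \<Rightarrow> ('i \<Rightarrow> 'i \<Rightarrow> 'm)
    \<Rightarrow> 'o \<Rightarrow> ('i \<Rightarrow> 'm) \<Rightarrow> bool" where
  "is_cone C I DO DM L p \<longleftrightarrow> L \<in> Obj C \<and>
     (\<forall>i \<in> I. p i \<in> hom C L (DO i)) \<and>
     (\<forall>i \<in> I. \<forall>j \<in> I. i \<le> j \<longrightarrow> Comp C (DM i j) (p j) = p i)"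

definition is_limit :: "('o, 'm) cat \<Rightarrow> ('i::wellorder) set \<Rightarrow> ('i \<Rightarrow> 'o) \<Rightarrow> ('i \<Rightarrow> 'i \<Rightarrow> 'm)
    \<Rightarrow> 'o \<Rightarrow> ('i \<Rightarrow> 'm) \<Rightarrow> bool" where
  "is_limit C I DO DM L p \<longleftrightarrow> is_cone C I DO DM L p \<and>
     (\<forall>X q. is_cone C I DO DM X q \<longrightarrow>
        (\<exists>!u. u \<in> hom C X L \<and> (\<forall>i \<in> I. Comp C (p i) u = q i)))"

definition has_chain_limits :: "('o, 'm) cat \<Rightarrow> 'i::wellorder itself \<Rightarrow> bool" where
  "has_chain_limits C (_ :: 'i itself) \<longleftrightarrow>
     (\<forall>(I :: 'i set) DO DM. op_chain C I DO DM \<longrightarrow> (\<exists>L p. is_limit C I DO DM L p))"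

definition induced_lim :: "('o, 'm) cat \<Rightarrow> ('i::wellorder) set \<Rightarrow> 'o \<Rightarrow> ('i \<Rightarrow> 'm)
    \<Rightarrow> 'o \<Rightarrow> ('i \<Rightarrow> 'm) \<Rightarrow> ('i \<Rightarrow> 'm) \<Rightarrow> 'm \<Rightarrow> bool" where
  "induced_lim C I L p L' p' f u \<longleftrightarrow> u \<in> hom C L L' \<and>
     (\<forall>i \<in> I. Comp C (p' i) u = Comp C (f i) (p i))"

end

theory Submission
  imports Defs
begin

text \<open>The limit projections \<open>p' i\<close> are jointly monic, so by stability
  \<open>d(lim f, lim g)\<close> is the supremum of \<open>d(p' i \<cdot> lim f, p' i \<cdot> lim g) = d(f i \<cdot> p i, g i \<cdot> p i)\<close>,
  and each of these is at most \<open>d(f i, g i)\<close> because precomposition is non-expansive.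
  For the empty chain the limit is terminal, so \<open>lim f = lim g\<close>.\<close>

lemma category_hom_Obj:
  assumes "category C" and "a \<in> hom C A B"
  shows "A \<in> Obj C" and "B \<in> Obj C"
  using assms unfolding category_def hom_def by auto

lemma category_comp_in_hom:
  assumes "category C" and "a \<in> hom C A B" and "b \<in> hom C B E"
  shows "Comp C b a \<in> hom C A E"
  using assms unfolding category_def hom_def by auto

lemma category_comp_assoc:
  assumes "category C" and "a \<in> hom C A B" and "b \<in> hom C B E" and "c \<in> hom C E F"
  shows "Comp C c (Comp C b a) = Comp C (Comp C c b) a"
  using assms unfolding category_def hom_def by auto

lemma M_category_category: "M_category C d \<Longrightarrow> category C"
  unfolding M_category_def by simp

lemma M_category_ultrametric:
  assumes "M_category C d" and "f \<in> hom C A B"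
  shows "complete_bounded_ultrametric_on (hom C A B) d"
proof -
  have "A \<in> Obj C" "B \<in> Obj C"
    using category_hom_Obj[OF M_category_category[OF assms(1)] assms(2)] .
  with assms(1) show ?thesis unfolding M_category_def by blast
qed

lemma M_category_dist_self:
  assumes "M_category C d" and "f \<in> hom C A B"
  shows "d f f = 0"
  using M_category_ultrametric[OF assms] assms(2)
  unfolding complete_bounded_ultrametric_on_def by simp

lemma M_category_dist_bounds:
  assumes "M_category C d" and "f \<in> hom C A B" and "g \<in> hom C A B"
  shows "0 \<le> d f g" and "d f g \<le> 1"
  using M_category_ultrametric[OF assms(1,2)] assms(2,3)
  unfolding complete_bounded_ultrametric_on_def by auto

lemma M_category_comp_dist_le:
  assumes "M_category C d" and "f \<in> hom C A B" and "f' \<in> hom C A B"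
    and "g \<in> hom C B E" and "g' \<in> hom C B E"
  shows "d (Comp C g f) (Comp C g' f') \<le> max (d g g') (d f f')"
proof -
  have "A \<in> Obj C" "B \<in> Obj C" "E \<in> Obj C"
    using category_hom_Obj[OF M_category_category[OF assms(1)]] assms(2,4) by blast+
  with assms show ?thesis unfolding M_category_def by blast
qed

lemma M_category_precomp_dist_le:
  assumes "M_category C d" and "x \<in> hom C A B" and "f \<in> hom C B E" and "g \<in> hom C B E"
  shows "d (Comp C f x) (Comp C g x) \<le> d f g"
proof -
  have "d (Comp C f x) (Comp C g x) \<le> max (d f g) (d x x)"
    using M_category_comp_dist_le[OF assms(1,2,2,3,4)] .
  also have "\<dots> = d f g"
    using M_category_dist_self[OF assms(1,2)] M_category_dist_bounds(1)[OF assms(1,3,4)] by simp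
  finally show ?thesis .
qed

lemma stable_dist_eq_SUP:
  assumes "stable C d" and "A \<in> Obj C" and "B \<in> Obj C"
    and "f \<in> hom C A B" and "g \<in> hom C A B"
    and "H \<noteq> {}" and "\<And>h. h \<in> H \<Longrightarrow> h \<in> Arr C \<and> Dom C h = B" and "jointly_monic C B H"
  shows "d f g = (SUP h \<in> H. d (Comp C h f) (Comp C h g))"
  using assms unfolding stable_def by blast

lemma limit_projections_jointly_monic:
  assumes cat: "category C" and chain: "op_chain C I DO DM" and lim: "is_limit C I DO DM L p"
  shows "jointly_monic C L (p ` I)"
  unfolding jointly_monic_def
proof (intro ballI impI)
  fix X u v
  assume X: "X \<in> Obj C" and u: "u \<in> hom C X L" and v: "v \<in> hom C X L"
    and eq: "\<forall>h \<in> p ` I. Comp C h u = Comp C h v"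
  have p: "\<And>i. i \<in> I \<Longrightarrow> p i \<in> hom C L (DO i)"
    and p_compat: "\<And>i j. i \<in> I \<Longrightarrow> j \<in> I \<Longrightarrow> i \<le> j \<Longrightarrow> Comp C (DM i j) (p j) = p i"
    and univ: "\<And>Y q. is_cone C I DO DM Y q \<Longrightarrow>
        \<exists>!w. w \<in> hom C Y L \<and> (\<forall>i \<in> I. Comp C (p i) w = q i)"
    using lim unfolding is_limit_def is_cone_def by auto
  have DM: "\<And>i j. i \<in> I \<Longrightarrow> j \<in> I \<Longrightarrow> i \<le> j \<Longrightarrow> DM i j \<in> hom C (DO j) (DO i)"
    using chain unfolding op_chain_def by auto
  have "is_cone C I DO DM X (\<lambda>i. Comp C (p i) u)"
    unfolding is_cone_def
  proof (intro conjI ballI impI)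
    show "X \<in> Obj C" by (fact X)
    fix i assume i: "i \<in> I"
    show "Comp C (p i) u \<in> hom C X (DO i)"
      using category_comp_in_hom[OF cat u p[OF i]] .
    fix j assume j: "j \<in> I" and ij: "i \<le> j"
    show "Comp C (DM i j) (Comp C (p j) u) = Comp C (p i) u"
      using category_comp_assoc[OF cat u p[OF j] DM[OF i j ij]] p_compat[OF i j ij] by simp
  qed
  from univ[OF this] u v eq show "u = v" by auto
qed

lemma induced_lim_dist_le:
  assumes M: "M_category C d" and "stable C d" and "op_chain C I DO' DM'"
    and f: "nat_trans C I DO DM DO' DM' f" and g: "nat_trans C I DO DM DO' DM' g"
    and lim: "is_limit C I DO DM L p" and lim': "is_limit C I DO' DM' L' p'"
    and limf: "induced_lim C I L p L' p' f limf" and limg: "induced_lim C I L p L' p' g limg"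
    and bound: "\<And>i. i \<in> I \<Longrightarrow> d (f i) (g i) \<le> c" and "0 \<le> c"
  shows "d limf limg \<le> c"
proof -
  have cat: "category C" using M by (rule M_category_category)
  have monic: "jointly_monic C L' (p' ` I)"
    using limit_projections_jointly_monic[OF cat assms(3) lim'] .
  have limf_hom: "limf \<in> hom C L L'" and limg_hom: "limg \<in> hom C L L'"
    using limf limg unfolding induced_lim_def by auto
  show ?thesis
  proof (cases "I = {}")
    case True
    have "limf = limg"
      using monic limf_hom limg_hom category_hom_Obj[OF cat limf_hom]
      unfolding jointly_monic_def True by blast
    then show ?thesis using M_category_dist_self[OF M limf_hom] \<open>0 \<le> c\<close> by simp
  next
    case False
    have p': "\<And>i. i \<in> I \<Longrightarrow> p' i \<in> hom C L' (DO' i)"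
      using lim' unfolding is_limit_def is_cone_def by auto
    have "d limf limg = (SUP h \<in> p' ` I. d (Comp C h limf) (Comp C h limg))"
      using category_hom_Obj[OF cat limf_hom] p' False
      by (intro stable_dist_eq_SUP[OF assms(2) _ _ limf_hom limg_hom _ _ monic])
        (auto simp: hom_def)
    also have "\<dots> \<le> c"
    proof (rule cSUP_least)
      show "p' ` I \<noteq> {}" using False by simp
      fix h assume "h \<in> p' ` I"
      then obtain i where i: "i \<in> I" and h: "h = p' i" by blast
      have p: "p i \<in> hom C L (DO i)"
        using lim i unfolding is_limit_def is_cone_def by auto
      have "d (Comp C h limf) (Comp C h limg) = d (Comp C (f i) (p i)) (Comp C (g i) (p i))"
        using limf limg i h unfolding induced_lim_def by simp
      also have "\<dots> \<le> d (f i) (g i)"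
        using f g i by (intro M_category_precomp_dist_le[OF M p]) (auto simp: nat_trans_def)
      also have "\<dots> \<le> c" using bound[OF i] .
      finally show "d (Comp C h limf) (Comp C h limg) \<le> c" .
    qed
    finally show ?thesis .
  qed
qed

theorem lemmaA1:
  fixes C :: "('o, 'm) cat" and d :: "'m \<Rightarrow> 'm \<Rightarrow> real"
    and I :: "('i::wellorder) set"
    and DO DO' :: "'i \<Rightarrow> 'o" and DM DM' :: "'i \<Rightarrow> 'i \<Rightarrow> 'm"
    and f g :: "'i \<Rightarrow> 'm"
    and L L' :: 'o and p p' :: "'i \<Rightarrow> 'm" and limf limg :: 'm
  assumes "M_category C d" and "stable C d" and "has_chain_limits C TYPE('i)"
    and "op_chain C I DO DM" and "op_chain C I DO' DM'"
    and "nat_trans C I DO DM DO' DM' f" and "nat_trans C I DO DM DO' DM' g"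
    and "is_limit C I DO DM L p" and "is_limit C I DO' DM' L' p'"
    and "induced_lim C I L p L' p' f limf" and "induced_lim C I L p L' p' g limg"
  shows "d limf limg \<le> Sup (insert 0 ((\<lambda>i. d (f i) (g i)) ` I))"
proof -
  have "d (f i) (g i) \<le> 1" if "i \<in> I" for i
    using assms(6,7) that by (intro M_category_dist_bounds(2)[OF assms(1)]) (auto simp: nat_trans_def)
  then have "bdd_above (insert 0 ((\<lambda>i. d (f i) (g i)) ` I))"
    by (intro bdd_aboveI[where M = 1]) auto
  then show ?thesis
    by (intro induced_lim_dist_le[OF assms(1,2,5,6,7,8,9,10,11)] cSup_upper) auto
qed

end
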